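(* Assume the following. (A1) $D$ is a real vector space; $M(\cdot,\cdot)$, $N(\cdot,\cdot)$ are symmetric bilinear forms on $D$, $M$ positive definite. (A2) There is a sequence $(\lambda_i,\varphi_i)_{i\in\mathbb N}\subset\mathbb R\times D$ with $\lambda_1\le\lambda_2\le\cdots$, $M(\varphi_i,v)=\lambda_iN(\varphi_i,v)$ for all $v\in D$, $M(\varphi_i,\varphi_j)=\delta_{ij}$, and $N(v,v)=\sum_{i=1}^\infty\lambda_i|N(v,\varphi_i)|^2$ for all $v\in D$. (A3) $X$ is a real vector space, $b_G$ a symmetric positive semidefinite bilinear form on $X$, and $T:D\to X$ linear with $b_G(Tu,Tv)=M(u,v)$ for all $u,v\in D$. (A4) $v_1,\dots,v_n\in D$ and $w_1,\dots,w_n\in X$ satisfy $b_G(w_i,Tv)=N(v_i,v)$ for all $v\in D$, $i=1,\dots,n$. (A5) $\rho>0$; with $A_0=(M(v_i,v_j))$, $A_1=(N(v_i,v_j))$, $A_2=(b_G(w_i,w_j))$, $A:=A_0-\rho A_1$, $B:=A_0-2\rho A_1+\rho^2A_2$, the matrix $B$ is positive definite; $\nu_1\le\cdots\le\nu_n$ are the eigenvalues of $Az=\nu Bz$ and $q$ is the number of negative ones. Suppose moreover $\rho\le\lambda_{m+1}$ for some integer $m\ge n$. Then $$\lambda_{m+1-k}\ \ge\ \rho-\frac{\rho}{1-\nu_k}\qquad(1\le k\le q).$$ In particular, if $A_1$ is positive definite and $\rho>\Lambda_n$, where $\Lambda_n$ is the largest eigenvalue of $A_0x=\Lambda A_1x$,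 then $\nu_n<0$, i.e. $q=n$, and the bound holds for all $1\le k\le n$. *)

theory Defs
  imports Main "Jordan_Normal_Form.Determinant"
begin

definition bilinear_form :: "('a::real_vector \<Rightarrow> 'a \<Rightarrow> real) \<Rightarrow> bool" where
  "bilinear_form B \<longleftrightarrow> (\<forall>y. linear (\<lambda>x. B x y)) \<and> (\<forall>x. linear (\<lambda>y. B x y))"

definition symmetric_form :: "('a \<Rightarrow> 'a \<Rightarrow> real) \<Rightarrow> bool" where
  "symmetric_form B \<longleftrightarrow> (\<forall>x y. B x y = B y x)"

definition pos_def_mat :: "nat \<Rightarrow> real mat \<Rightarrow> bool" where
  "pos_def_mat n C \<longleftrightarrow> C \<in> carrier_mat n n \<and> transpose_mat C = C \<and>
     (\<forall>x \<in> carrier_vec n. x \<noteq> 0\<^sub>v n \<longrightarrow> 0 < x \<bullet> (C *\<^sub>v x))"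

text \<open>\<open>mu 1 \<le> ... \<le> mu n\<close> are the eigenvalues (with algebraic multiplicity) of the
  generalized eigenproblem \<open>P z = t Q z\<close>, i.e. the roots of \<open>det (P - t Q)\<close>:
  \<open>det (P - t Q) = det Q * \<Prod>k=1..n. (mu k - t)\<close> for all real t.\<close>
definition gen_eigenvalues_sorted :: "nat \<Rightarrow> real mat \<Rightarrow> real mat \<Rightarrow> (nat \<Rightarrow> real) \<Rightarrow> bool" where
  "gen_eigenvalues_sorted n P Q mu \<longleftrightarrow>
     (\<forall>k \<in> {1..<n}. mu k \<le> mu (Suc k)) \<and>
     (\<forall>t::real. det (P - t \<cdot>\<^sub>m Q) = det Q * (\<Prod>k\<in>{1..n}. mu k - t))"

end

theory Submission
  imports Defs "Jordan_Normal_Form.Schur_Decomposition"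
begin

(* Suppose lam (m + 1 - k) < rho - rho / (1 - nu k) for some k with nu k < 0. Then some t with
   nu k < t < 0 still satisfies (1 - t) lam (m + 1 - k) + t rho < 0. The symmetric pencil (A, B) has
   a B-orthogonal eigenbasis (Schur triangularization of B^-1 A, then Gram-Schmidt with respect to B),
   so the span of its first k eigenvectors contains a coefficient vector z with z^T (A - t B) z < 0
   for which x = sum z_i v_i is N-orthogonal to phi (m + 2 - k), ..., phi m. With y = sum z_i w_i,
   this quantity equals (1 - t) M(x,x) - rho (1 - 2t) N(x,x) - t rho^2 bG(y,y). Expanding N(x,x) in
   the eigenpairs and bounding M(x,x) and bG(y,y) by Bessel's inequality, it is at least the sum of
   N(x, phi i)^2 (lam i - rho) ((1 - t) lam i + t rho), whose terms are all nonnegative: below the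
   gap both factors are nonpositive, in the gap N(x, phi i) = 0, and above it lam i >= rho. For the second part, rho > Lambda n makes A = A0 - rho A1
   negative definite, so every nu k is negative. *)

lemma lift_Suc_mono_le_interval:
  fixes f :: "nat \<Rightarrow> 'a::order"
  assumes Suc_le: "\<And>k. a \<le> k \<Longrightarrow> k < b \<Longrightarrow> f k \<le> f (Suc k)"
    and "a \<le> i" "i \<le> j" "j \<le> b"
  shows "f i \<le> f j"
  using assms(3,4)
proof (induction j rule: dec_induct)
  case (step j)
  then have "f i \<le> f j" by simp
  also have "f j \<le> f (Suc j)" using step assms(2) by (intro Suc_le) auto
  finally show ?case .
qed simp

lemma sorted_negative_prefix:
  fixes \<nu> :: "nat \<Rightarrow> real"
  assumes sorted: "\<And>k. 1 \<le> k \<Longrightarrow> k < n \<Longrightarrow> \<nu> k \<le> \<nu> (Suc k)"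
  shows "{1..card {k\<in>{1..n}. \<nu> k < 0}} \<subseteq> {k\<in>{1..n}. \<nu> k < 0}"
proof
  fix k assume k: "k \<in> {1..card {k\<in>{1..n}. \<nu> k < 0}}"
  have "card {k\<in>{1..n}. \<nu> k < 0} \<le> card {1..n}" by (rule card_mono) auto
  then have kn: "k \<le> n" using k by simp
  have "\<nu> k < 0"
  proof (rule ccontr)
    assume nonneg: "\<not> \<nu> k < 0"
    have "{j\<in>{1..n}. \<nu> j < 0} \<subseteq> {1..<k}"
    proof
      fix j assume j: "j \<in> {j\<in>{1..n}. \<nu> j < 0}"
      have "j < k"
      proof (rule ccontr)
        assume "\<not> j < k"
        then have "\<nu> k \<le> \<nu> j"
          using j k kn by (intro lift_Suc_mono_le_interval[where f = \<nu> and a = 1 and b = n, OF sorted]) auto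
        with nonneg j show False by simp
      qed
      with j show "j \<in> {1..<k}" by simp
    qed
    then have "card {j\<in>{1..n}. \<nu> j < 0} \<le> card {1..<k}" by (rule card_mono[rotated]) simp
    with k show False by auto
  qed
  with k kn show "k \<in> {k\<in>{1..n}. \<nu> k < 0}" by simp
qed

lemma affine_neg_persists_right:
  fixes \<nu> L \<rho> :: real
  assumes \<nu>: "\<nu> < 0" and at_\<nu>: "(1 - \<nu>) * L + \<nu> * \<rho> < 0"
  obtains t where "\<nu> < t" "t < 0" "(1 - t) * L + t * \<rho> < 0"
proof (cases "\<rho> - L \<le> 0")
  case True
  have "(1 - \<nu> / 2) * L + \<nu> / 2 * \<rho> = L + \<nu> * (\<rho> - L) / 2" by (simp add: field_simps)
  also have "\<dots> \<le> L + \<nu> * (\<rho> - L)" using True \<nu> by (simp add: mult_nonpos_nonpos)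
  also have "\<dots> < 0" using at_\<nu> by (simp add: algebra_simps)
  finally show thesis using \<nu> by (intro that[of "\<nu> / 2"]) auto
next
  case False
  define root where "root = - L / (\<rho> - L)"
  define t where "t = (\<nu> + min 0 root) / 2"
  have "\<nu> < root" using at_\<nu> False unfolding root_def by (simp add: field_simps)
  then have t: "\<nu> < t" "t < 0" "t < root" unfolding t_def using \<nu> by auto
  have "(1 - t) * L + t * \<rho> = L + t * (\<rho> - L)" by (simp add: algebra_simps)
  also have "\<dots> < L + root * (\<rho> - L)" using t(3) False by simp
  also have "\<dots> = 0" unfolding root_def using False by simp
  finally show thesis using t by (intro that) auto
qed

lemma weighted_series_nonneg:
  fixes lam c :: "nat \<Rightarrow> real"
  assumes sums: "(\<lambda>i. lam i * (c i)\<^sup>2) sums S"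
    and P: "\<And>K. (\<Sum>i<K. (lam i * c i)\<^sup>2) \<le> P" and R: "\<And>K. (\<Sum>i<K. (c i)\<^sup>2) \<le> R"
    and \<alpha>: "0 \<le> \<alpha>" and \<gamma>: "0 \<le> \<gamma>"
    and terms: "\<And>i. 0 \<le> (c i)\<^sup>2 * (\<alpha> * (lam i)\<^sup>2 + \<beta> * lam i + \<gamma>)"
  shows "0 \<le> \<alpha> * P + \<beta> * S + \<gamma> * R"
proof (rule LIMSEQ_le_const)
  show "(\<lambda>K. \<alpha> * P + \<beta> * (\<Sum>i<K. lam i * (c i)\<^sup>2) + \<gamma> * R) \<longlonglongrightarrow> \<alpha> * P + \<beta> * S + \<gamma> * R"
    using sums unfolding sums_def by (intro tendsto_intros)
  have "0 \<le> \<alpha> * P + \<beta> * (\<Sum>i<K. lam i * (c i)\<^sup>2) + \<gamma> * R" for K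
  proof -
    have "0 \<le> (\<Sum>i<K. (c i)\<^sup>2 * (\<alpha> * (lam i)\<^sup>2 + \<beta> * lam i + \<gamma>))"
      by (rule sum_nonneg) (rule terms)
    also have "\<dots> = \<alpha> * (\<Sum>i<K. (lam i * c i)\<^sup>2) + \<beta> * (\<Sum>i<K. lam i * (c i)\<^sup>2)
        + \<gamma> * (\<Sum>i<K. (c i)\<^sup>2)"
      by (simp add: algebra_simps power_mult_distrib sum.distrib sum_distrib_left)
    also have "\<dots> \<le> \<alpha> * P + \<beta> * (\<Sum>i<K. lam i * (c i)\<^sup>2) + \<gamma> * R"
      using P R \<alpha> \<gamma> by (intro add_mono mult_left_mono order_refl)
    finally show ?thesis .
  qed
  then show "\<exists>N. \<forall>K\<ge>N. 0 \<le> \<alpha> * P + \<beta> * (\<Sum>i<K. lam i * (c i)\<^sup>2) + \<gamma> * R" by blast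
qed

lemma gap_factor_nonneg:
  fixes l L t \<rho> :: real
  assumes t: "t \<le> 0" and \<rho>: "0 < \<rho>" and l: "l \<le> L \<and> (1 - t) * L + t * \<rho> \<le> 0 \<or> \<rho> \<le> l"
  shows "0 \<le> (l - \<rho>) * ((1 - t) * l + t * \<rho>)"
  using l
proof
  assume low: "l \<le> L \<and> (1 - t) * L + t * \<rho> \<le> 0"
  then have "(1 - t) * l \<le> (1 - t) * L" using t by (intro mult_left_mono) auto
  with low have neg: "(1 - t) * l + t * \<rho> \<le> 0" by simp
  have "l \<le> \<rho>"
  proof (rule ccontr)
    assume "\<not> l \<le> \<rho>"
    then have "(1 - t) * \<rho> \<le> (1 - t) * l" using t by (intro mult_left_mono) auto
    with neg \<rho> show False by (simp add: algebra_simps)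
  qed
  with neg show ?thesis by (simp add: mult_nonpos_nonpos)
next
  assume high: "\<rho> \<le> l"
  then have "(1 - t) * \<rho> \<le> (1 - t) * l" using t by (intro mult_left_mono) auto
  then have "0 \<le> (1 - t) * l + t * \<rho>" using \<rho> by (simp add: algebra_simps)
  with high show ?thesis by simp
qed

lemma bilinear_form_sum_left:
  assumes "bilinear_form S"
  shows "S (\<Sum>l\<in>L. c l *\<^sub>R x l) u = (\<Sum>l\<in>L. c l * S (x l) u)"
proof -
  have lin: "linear (\<lambda>x. S x u)" using assms unfolding bilinear_form_def by blast
  show ?thesis using linear_sum[OF lin, of "\<lambda>l. c l *\<^sub>R x l" L] linear_scale[OF lin] by simp
qed

lemma bilinear_form_sum_right:
  assumes "bilinear_form S"
  shows "S u (\<Sum>l\<in>L. c l *\<^sub>R x l) = (\<Sum>l\<in>L. c l * S u (x l))"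
proof -
  have lin: "linear (\<lambda>y. S u y)" using assms unfolding bilinear_form_def by blast
  show ?thesis using linear_sum[OF lin, of "\<lambda>l. c l *\<^sub>R x l" L] linear_scale[OF lin] by simp
qed

lemma bilinear_form_diff:
  assumes "bilinear_form S"
  shows "S (x - y) u = S x u - S y u" and "S u (x - y) = S u x - S u y"
proof -
  have lin1: "linear (\<lambda>x. S x u)" and lin2: "linear (\<lambda>y. S u y)"
    using assms unfolding bilinear_form_def by blast+
  show "S (x - y) u = S x u - S y u" using linear_diff[OF lin1] by simp
  show "S u (x - y) = S u x - S u y" using linear_diff[OF lin2] by simp
qed

lemma bilinear_form_zero_left:
  assumes "bilinear_form S"
  shows "S 0 u = 0"
proof -
  have lin: "linear (\<lambda>x. S x u)" using assms unfolding bilinear_form_def by blast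
  show ?thesis using linear_0[OF lin] by simp
qed

lemma bessel_inequality:
  fixes f :: "nat \<Rightarrow> 'a::real_vector"
  assumes bil: "bilinear_form S" and sym: "symmetric_form S" and nonneg: "\<And>x. 0 \<le> S x x"
    and orthonormal: "\<And>i j. S (f i) (f j) = (if i = j then 1 else 0)"
  shows "(\<Sum>i<K. (S x (f i))\<^sup>2) \<le> S x x"
proof -
  define s where "s = (\<Sum>i<K. S x (f i) *\<^sub>R f i)"
  have "S x s = (\<Sum>i<K. (S x (f i))\<^sup>2)"
    unfolding s_def bilinear_form_sum_right[OF bil] by (simp add: power2_eq_square)
  moreover have "S s x = S x s" using sym unfolding symmetric_form_def by blast
  moreover have "S s s = (\<Sum>i<K. (S x (f i))\<^sup>2)"
  proof -
    have "S s s = (\<Sum>i<K. S x (f i) * (\<Sum>j<K. S x (f j) * S (f j) (f i)))"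
      unfolding s_def bilinear_form_sum_left[OF bil] bilinear_form_sum_right[OF bil] ..
    also have "\<dots> = (\<Sum>i<K. S x (f i) * S x (f i))"
    proof (rule sum.cong[OF refl])
      fix i assume "i \<in> {..<K}"
      then show "S x (f i) * (\<Sum>j<K. S x (f j) * S (f j) (f i)) = S x (f i) * S x (f i)"
        by (subst sum.mono_neutral_right[of "{..<K}" "{i}"]) (auto simp: orthonormal)
    qed
    finally show ?thesis by (simp add: power2_eq_square)
  qed
  moreover have "0 \<le> S (x - s) (x - s)" by (rule nonneg)
  ultimately show ?thesis by (simp add: bilinear_form_diff[OF bil])
qed

section \<open>Bilinear forms of matrices\<close>

(* Coefficient vectors are functions nat \<Rightarrow> real; only their entries below the dimension of the
   matrix matter. *)
definition mat_form :: "real mat \<Rightarrow> (nat \<Rightarrow> real) \<Rightarrow> (nat \<Rightarrow> real) \<Rightarrow> real" where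
  "mat_form C x y = (\<Sum>i<dim_row C. \<Sum>j<dim_col C. x i * C $$ (i, j) * y j)"

lemma mat_form_add_left: "mat_form C (\<lambda>r. x r + x' r) y = mat_form C x y + mat_form C x' y"
  unfolding mat_form_def by (simp add: algebra_simps sum.distrib)

lemma mat_form_diff_left: "mat_form C (\<lambda>r. x r - x' r) y = mat_form C x y - mat_form C x' y"
  unfolding mat_form_def by (simp add: algebra_simps sum_subtractf)

lemma mat_form_scale_left: "mat_form C (\<lambda>r. c * x r) y = c * mat_form C x y"
  unfolding mat_form_def by (simp add: sum_distrib_left mult.assoc)

lemma mat_form_sum_left: "mat_form C (\<lambda>r. \<Sum>l\<in>L. x l r) y = (\<Sum>l\<in>L. mat_form C (x l) y)"
  unfolding mat_form_def sum_distrib_right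
  by (subst sum.swap, rule sum.cong[OF refl], rule sum.swap)

lemma mat_form_scale_right: "mat_form C y (\<lambda>r. c * x r) = c * mat_form C y x"
  unfolding mat_form_def by (simp add: sum_distrib_left algebra_simps)

lemma mat_form_sum_right: "mat_form C y (\<lambda>r. \<Sum>l\<in>L. x l r) = (\<Sum>l\<in>L. mat_form C y (x l))"
  unfolding mat_form_def sum_distrib_left
  by (subst sum.swap, rule sum.cong[OF refl], rule sum.swap)

lemmas mat_form_linear =
  mat_form_add_left mat_form_diff_left mat_form_scale_left mat_form_sum_left
  mat_form_scale_right mat_form_sum_right

lemma mat_form_commute:
  assumes "C \<in> carrier_mat n n" "transpose_mat C = C"
  shows "mat_form C x y = mat_form C y x"
proof -
  have "C $$ (i, j) = C $$ (j, i)" if "i < n" "j < n" for i j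
    using assms that by (metis carrier_matD index_transpose_mat(1))
  with assms(1) show ?thesis
    unfolding mat_form_def by (subst sum.swap) (auto intro!: sum.cong simp: mult.commute)
qed

lemma mat_form_cong:
  assumes "C \<in> carrier_mat n n" "\<And>r. r < n \<Longrightarrow> x r = x' r" "\<And>r. r < n \<Longrightarrow> y r = y' r"
  shows "mat_form C x y = mat_form C x' y'"
  using assms unfolding mat_form_def by (auto intro!: sum.cong)

lemma mat_form_pos:
  assumes "pos_def_mat n B" "\<exists>r<n. x r \<noteq> 0"
  shows "0 < mat_form B x x"
proof -
  have B: "B \<in> carrier_mat n n" using assms(1) unfolding pos_def_mat_def by auto
  have "vec n x \<noteq> 0\<^sub>v n" using assms(2) by (auto simp: vec_eq_iff)
  then have "0 < vec n x \<bullet> (B *\<^sub>v vec n x)" using assms(1) unfolding pos_def_mat_def by auto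
  also have "vec n x \<bullet> (B *\<^sub>v vec n x) = mat_form B x x"
    using B unfolding mat_form_def
    by (auto simp: scalar_prod_def sum_distrib_left mult.assoc atLeast0LessThan intro!: sum.cong)
  finally show ?thesis .
qed

lemma mat_form_pos_imp_nonzero:
  assumes "C \<in> carrier_mat n n" "0 < mat_form C x x"
  shows "\<exists>r<n. x r \<noteq> 0"
proof (rule ccontr)
  assume "\<not> ?thesis"
  then have "mat_form C x x = mat_form C (\<lambda>_. 0) (\<lambda>_. 0)"
    by (intro mat_form_cong[OF assms(1)]) auto
  with assms(2) show False by (simp add: mat_form_def)
qed

lemma mat_form_add_mat:
  assumes "C \<in> carrier_mat n n" "D \<in> carrier_mat n n"
  shows "mat_form (C + D) x y = mat_form C x y + mat_form D x y"
proof -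
  have "mat_form (C + D) x y = (\<Sum>i<n. \<Sum>j<n. x i * C $$ (i, j) * y j + x i * D $$ (i, j) * y j)"
    using assms unfolding mat_form_def by (auto simp: algebra_simps intro!: sum.cong)
  then show ?thesis using assms unfolding mat_form_def by (simp add: sum.distrib)
qed

lemma mat_form_minus_mat:
  assumes "C \<in> carrier_mat n n" "D \<in> carrier_mat n n"
  shows "mat_form (C - D) x y = mat_form C x y - mat_form D x y"
proof -
  have "mat_form (C - D) x y = (\<Sum>i<n. \<Sum>j<n. x i * C $$ (i, j) * y j - x i * D $$ (i, j) * y j)"
    using assms unfolding mat_form_def by (auto simp: algebra_simps intro!: sum.cong)
  then show ?thesis using assms unfolding mat_form_def by (simp add: sum_subtractf)
qed

lemma mat_form_smult_mat: "mat_form (t \<cdot>\<^sub>m C) x y = t * mat_form C x y"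
  unfolding mat_form_def by (auto simp: sum_distrib_left mult_ac intro!: sum.cong)

definition lin_comb :: "nat \<Rightarrow> (nat \<Rightarrow> real) \<Rightarrow> (nat \<Rightarrow> 'a) \<Rightarrow> 'a::real_vector" where
  "lin_comb n z v = (\<Sum>i<n. z i *\<^sub>R v i)"

lemma mat_form_gram:
  assumes "bilinear_form S"
  shows "mat_form (mat n n (\<lambda>(i, j). S (v i) (v j))) x y = S (lin_comb n x v) (lin_comb n y v)"
proof -
  have "S (lin_comb n x v) (lin_comb n y v) = (\<Sum>i<n. x i * (\<Sum>j<n. y j * S (v i) (v j)))"
    unfolding lin_comb_def bilinear_form_sum_left[OF assms] unfolding bilinear_form_sum_right[OF assms] ..
  also have "\<dots> = mat_form (mat n n (\<lambda>(i, j). S (v i) (v j))) x y"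
    unfolding mat_form_def by (auto simp: sum_distrib_left mult_ac intro!: sum.cong)
  finally show ?thesis ..
qed

lemma gram_pencil_form:
  fixes M N :: "'a::real_vector \<Rightarrow> 'a \<Rightarrow> real" and G :: "'b::real_vector \<Rightarrow> 'b \<Rightarrow> real"
    and n :: nat and v :: "nat \<Rightarrow> 'a" and w :: "nat \<Rightarrow> 'b" and \<rho> :: real
  assumes "bilinear_form M" "bilinear_form N" "bilinear_form G"
  defines "A0 \<equiv> mat n n (\<lambda>(i, j). M (v i) (v j))" and "A1 \<equiv> mat n n (\<lambda>(i, j). N (v i) (v j))"
    and "A2 \<equiv> mat n n (\<lambda>(i, j). G (w i) (w j))"
  defines "A \<equiv> A0 - \<rho> \<cdot>\<^sub>m A1" and "B \<equiv> A0 - (2 * \<rho>) \<cdot>\<^sub>m A1 + \<rho>\<^sup>2 \<cdot>\<^sub>m A2"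
  shows "mat_form A z z - t * mat_form B z z
    = (1 - t) * M (lin_comb n z v) (lin_comb n z v) - \<rho> * (1 - 2 * t) * N (lin_comb n z v) (lin_comb n z v)
      - t * \<rho>\<^sup>2 * G (lin_comb n z w) (lin_comb n z w)"
  unfolding A_def B_def A0_def A1_def A2_def using assms(1-3)
  by (simp add: mat_form_add_mat[of _ n] mat_form_minus_mat[of _ n] mat_form_smult_mat minus_carrier_mat
      mat_form_gram algebra_simps)

lemma lin_comb_adjoint:
  assumes G: "bilinear_form G" and N: "bilinear_form N"
    and adjoint: "\<And>i. i < n \<Longrightarrow> G (w i) (T u) = N (v i) u"
  shows "G (lin_comb n z w) (T u) = N (lin_comb n z v) u"
  unfolding lin_comb_def bilinear_form_sum_left[OF G] bilinear_form_sum_left[OF N]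
  by (simp add: adjoint)

lemma transpose_smult_mat: "transpose_mat (c \<cdot>\<^sub>m C) = c \<cdot>\<^sub>m transpose_mat C"
  by (rule eq_matI) auto

lemma gram_transpose:
  assumes "symmetric_form S"
  shows "transpose_mat (mat n n (\<lambda>(i, j). S (v i) (v j))) = mat n n (\<lambda>(i, j). S (v i) (v j))"
proof -
  have "S x y = S y x" for x y using assms unfolding symmetric_form_def by blast
  then show ?thesis by (intro eq_matI) simp_all
qed

section \<open>Eigenbases of symmetric pencils\<close>

definition in_prefix_span :: "nat \<Rightarrow> (nat \<Rightarrow> nat \<Rightarrow> real) \<Rightarrow> nat \<Rightarrow> (nat \<Rightarrow> real) \<Rightarrow> bool" where
  "in_prefix_span n p j z \<longleftrightarrow> (\<exists>c. \<forall>r<n. z r = (\<Sum>i<j. c i * p i r))"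

lemma in_prefix_span_comb: "in_prefix_span n p j (\<lambda>r. \<Sum>i<j. c i * p i r)"
  unfolding in_prefix_span_def by blast

lemma in_prefix_span_self:
  assumes "i < j"
  shows "in_prefix_span n p j (p i)"
proof -
  have "(\<Sum>i'<j. (if i' = i then 1 else 0) * p i' r) = (\<Sum>i'<j. if i' = i then p i' r else 0)" for r
    by (rule sum.cong) auto
  then have "p i r = (\<Sum>i'<j. (if i' = i then 1 else 0) * p i' r)" for r
    using assms by simp
  then show ?thesis unfolding in_prefix_span_def by (intro exI[of _ "\<lambda>i'. if i' = i then 1 else 0"]) simp
qed

lemma in_prefix_span_mono:
  assumes "in_prefix_span n p j z" "j \<le> j'"
  shows "in_prefix_span n p j' z"
proof -
  obtain c where c: "\<forall>r<n. z r = (\<Sum>i<j. c i * p i r)"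
    using assms(1) unfolding in_prefix_span_def by blast
  have "(\<Sum>i<j'. (if i < j then c i else 0) * p i r) = (\<Sum>i<j. c i * p i r)" for r
    using assms(2) by (intro sum.mono_neutral_cong_right) auto
  with c show ?thesis unfolding in_prefix_span_def
    by (intro exI[of _ "\<lambda>i. if i < j then c i else 0"]) simp
qed

lemma in_prefix_span_cong:
  assumes "\<And>r. r < n \<Longrightarrow> z r = z' r" "\<And>i. i < j \<Longrightarrow> p i = p' i"
  shows "in_prefix_span n p j z \<longleftrightarrow> in_prefix_span n p' j z'"
proof -
  have "(\<Sum>i<j. c i * p i r) = (\<Sum>i<j. c i * p' i r)" for c r
    using assms(2) by (intro sum.cong) auto
  then show ?thesis unfolding in_prefix_span_def using assms(1) by simp
qed

lemma in_prefix_span_add: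
  assumes "in_prefix_span n p j x" "in_prefix_span n p j y"
  shows "in_prefix_span n p j (\<lambda>r. x r + y r)"
proof -
  obtain c where "\<forall>r<n. x r = (\<Sum>i<j. c i * p i r)"
    using assms(1) unfolding in_prefix_span_def by blast
  moreover obtain c' where "\<forall>r<n. y r = (\<Sum>i<j. c' i * p i r)"
    using assms(2) unfolding in_prefix_span_def by blast
  ultimately have "\<forall>r<n. x r + y r = (\<Sum>i<j. (c i + c' i) * p i r)"
    by (simp add: distrib_right sum.distrib)
  then show ?thesis unfolding in_prefix_span_def by (intro exI[of _ "\<lambda>i. c i + c' i"]) simp
qed

lemma in_prefix_span_diff:
  assumes "in_prefix_span n p j x" "in_prefix_span n p j y"
  shows "in_prefix_span n p j (\<lambda>r. x r - y r)"
proof -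
  obtain c where "\<forall>r<n. x r = (\<Sum>i<j. c i * p i r)"
    using assms(1) unfolding in_prefix_span_def by blast
  moreover obtain c' where "\<forall>r<n. y r = (\<Sum>i<j. c' i * p i r)"
    using assms(2) unfolding in_prefix_span_def by blast
  ultimately have "\<forall>r<n. x r - y r = (\<Sum>i<j. (c i - c' i) * p i r)"
    by (simp add: left_diff_distrib sum_subtractf)
  then show ?thesis unfolding in_prefix_span_def by (intro exI[of _ "\<lambda>i. c i - c' i"]) simp
qed

lemma in_prefix_span_lincomb:
  assumes "finite L" "\<And>l. l \<in> L \<Longrightarrow> in_prefix_span n p j (f l)"
  shows "in_prefix_span n p j (\<lambda>r. \<Sum>l\<in>L. a l * f l r)"
proof -
  obtain c where c: "\<forall>l\<in>L. \<forall>r<n. f l r = (\<Sum>i<j. c l i * p i r)"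
    using bchoice[of L "\<lambda>l c. \<forall>r<n. f l r = (\<Sum>i<j. c i * p i r)"] assms(2)
    unfolding in_prefix_span_def by blast
  have "(\<Sum>l\<in>L. a l * f l r) = (\<Sum>i<j. (\<Sum>l\<in>L. a l * c l i) * p i r)" if "r < n" for r
  proof -
    have "(\<Sum>l\<in>L. a l * f l r) = (\<Sum>l\<in>L. \<Sum>i<j. a l * c l i * p i r)"
      using c that by (simp add: sum_distrib_left mult.assoc)
    also have "\<dots> = (\<Sum>i<j. \<Sum>l\<in>L. a l * c l i * p i r)"
      by (rule sum.swap)
    finally show ?thesis by (simp add: sum_distrib_right)
  qed
  then show ?thesis unfolding in_prefix_span_def by (intro exI[of _ "\<lambda>i. \<Sum>l\<in>L. a l * c l i"]) simp
qed

lemma in_prefix_span_trans: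
  assumes "\<And>l. l < k \<Longrightarrow> in_prefix_span n p j (f l)" "in_prefix_span n f k z"
  shows "in_prefix_span n p j z"
proof -
  obtain c where "\<forall>r<n. z r = (\<Sum>l<k. c l * f l r)"
    using assms(2) unfolding in_prefix_span_def by blast
  moreover have "in_prefix_span n p j (\<lambda>r. \<Sum>l<k. c l * f l r)"
    using assms(1) by (intro in_prefix_span_lincomb) auto
  ultimately show ?thesis
    using in_prefix_span_cong[of n z "\<lambda>r. \<Sum>l<k. c l * f l r" j p p] by simp
qed

lemma in_prefix_span_orthogonal_zero:
  assumes B: "pos_def_mat n B" and w: "in_prefix_span n e j w"
    and orth: "\<And>l. l < j \<Longrightarrow> mat_form B w (e l) = 0"
  shows "mat_form B w y = 0"
proof -
  have Bc: "B \<in> carrier_mat n n" using B unfolding pos_def_mat_def by auto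
  obtain c where c: "\<forall>r<n. w r = (\<Sum>l<j. c l * e l r)"
    using w unfolding in_prefix_span_def by blast
  have "mat_form B w w = mat_form B w (\<lambda>r. \<Sum>l<j. c l * e l r)"
    using c by (intro mat_form_cong[OF Bc]) auto
  also have "\<dots> = (\<Sum>l<j. c l * mat_form B w (e l))"
    by (simp only: mat_form_sum_right mat_form_scale_right)
  also have "\<dots> = 0" using orth by simp
  finally have "\<not> (\<exists>r<n. w r \<noteq> 0)" using mat_form_pos[OF B, of w] by auto
  then have "mat_form B w y = mat_form B (\<lambda>_. 0) y" by (intro mat_form_cong[OF Bc]) auto
  then show ?thesis by (simp add: mat_form_def)
qed

definition orth_eigenvectors ::
    "real mat \<Rightarrow> real mat \<Rightarrow> (nat \<Rightarrow> real) \<Rightarrow> nat \<Rightarrow> (nat \<Rightarrow> nat \<Rightarrow> real) \<Rightarrow> bool" where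
  "orth_eigenvectors A B \<mu> j e \<longleftrightarrow>
     (\<forall>l<j. \<forall>l'<j. l \<noteq> l' \<longrightarrow> mat_form B (e l) (e l') = 0) \<and>
     (\<forall>l<j. 0 < mat_form B (e l) (e l)) \<and>
     (\<forall>l<j. \<forall>y. mat_form A (e l) y = \<mu> l * mat_form B (e l) y)"

definition gen_eigenbasis ::
    "nat \<Rightarrow> real mat \<Rightarrow> real mat \<Rightarrow> (nat \<Rightarrow> real) \<Rightarrow> (nat \<Rightarrow> nat \<Rightarrow> real) \<Rightarrow> bool" where
  "gen_eigenbasis n A B \<mu> e \<longleftrightarrow> orth_eigenvectors A B \<mu> n e \<and> (\<forall>z. in_prefix_span n e n z)"

lemma gram_schmidt_spans:
  fixes \<alpha> :: "nat \<Rightarrow> real"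
  assumes e_span: "\<And>l. l < j \<Longrightarrow> in_prefix_span n p j (e l)"
    and p_span: "\<And>i. i < j \<Longrightarrow> in_prefix_span n e j (p i)"
  defines "e' \<equiv> e(j := (\<lambda>r. p j r - (\<Sum>l<j. \<alpha> l * e l r)))"
  shows "\<And>l. l < Suc j \<Longrightarrow> in_prefix_span n p (Suc j) (e' l)"
    and "\<And>i. i < Suc j \<Longrightarrow> in_prefix_span n e' (Suc j) (p i)"
proof -
  have e'_below: "e' l = e l" if "l < j" for l
    using that unfolding e'_def by simp
  show "in_prefix_span n p (Suc j) (e' l)" if "l < Suc j" for l
  proof (cases "l = j")
    case True
    have "in_prefix_span n p j (\<lambda>r. \<Sum>l<j. \<alpha> l * e l r)"
      using e_span by (intro in_prefix_span_lincomb) auto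
    then have "in_prefix_span n p (Suc j) (\<lambda>r. \<Sum>l<j. \<alpha> l * e l r)"
      by (rule in_prefix_span_mono) simp
    then show ?thesis
      unfolding True e'_def by (simp add: in_prefix_span_diff in_prefix_span_self)
  next
    case False
    with that have "l < j" by simp
    then show ?thesis
      unfolding e'_below[OF \<open>l < j\<close>] by (rule in_prefix_span_mono[OF e_span]) simp
  qed
  show "in_prefix_span n e' (Suc j) (p i)" if "i < Suc j" for i
  proof (cases "i = j")
    case True
    have "(\<Sum>l<j. (\<alpha>(j := 1)) l * e' l r) = (\<Sum>l<j. \<alpha> l * e l r)" for r
      by (rule sum.cong) (simp_all add: e'_below)
    then have "p j r = (\<Sum>l<Suc j. (\<alpha>(j := 1)) l * e' l r)" for r
      by (simp add: e'_def)
    then show ?thesis unfolding True in_prefix_span_def by (intro exI[of _ "\<alpha>(j := 1)"]) simp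
  next
    case False
    then have "in_prefix_span n e j (p i)" using that p_span by simp
    then have "in_prefix_span n e' j (p i)" using in_prefix_span_cong e'_below by blast
    then show ?thesis by (rule in_prefix_span_mono) simp
  qed
qed

lemma gram_schmidt_orthogonal:
  fixes e :: "nat \<Rightarrow> nat \<Rightarrow> real"
  assumes orth: "\<And>l l'. l < j \<Longrightarrow> l' < j \<Longrightarrow> l \<noteq> l' \<Longrightarrow> mat_form B (e l) (e l') = 0"
    and pos: "\<And>l. l < j \<Longrightarrow> 0 < mat_form B (e l) (e l)" and l: "l < j"
  shows "mat_form B (\<lambda>r. x r - (\<Sum>l'<j. mat_form B x (e l') / mat_form B (e l') (e l') * e l' r)) (e l) = 0"
proof -
  have "(\<Sum>l'<j. mat_form B x (e l') / mat_form B (e l') (e l') * mat_form B (e l') (e l))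
      = mat_form B x (e l) / mat_form B (e l) (e l) * mat_form B (e l) (e l)"
    using l orth by (subst sum.mono_neutral_right[of "{..<j}" "{l}"]) auto
  then show ?thesis
    using pos[OF l] by (simp only: mat_form_diff_left mat_form_sum_left mat_form_scale_left) simp
qed

lemma gram_schmidt_residual:
  fixes \<alpha> :: "nat \<Rightarrow> real"
  assumes tri: "mat_form A (p j) y = (\<Sum>i\<le>j. U i j * mat_form B (p i) y)"
    and eig: "\<And>l. l < j \<Longrightarrow> mat_form A (e l) y = U l l * mat_form B (e l) y"
  defines "x \<equiv> \<lambda>r. p j r - (\<Sum>l<j. \<alpha> l * e l r)"
  shows "mat_form A x y - U j j * mat_form B x y
    = mat_form B (\<lambda>r. (\<Sum>i<j. U i j * p i r) + (\<Sum>l<j. ((U j j - U l l) * \<alpha> l) * e l r)) y"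
proof -
  have a_x: "mat_form A x y = U j j * mat_form B (p j) y + (\<Sum>i<j. U i j * mat_form B (p i) y)
      - (\<Sum>l<j. \<alpha> l * (U l l * mat_form B (e l) y))"
    using tri unfolding x_def by (simp add: mat_form_linear eig lessThan_Suc_atMost[symmetric])
  have b_x: "mat_form B x y = mat_form B (p j) y - (\<Sum>l<j. \<alpha> l * mat_form B (e l) y)"
    unfolding x_def by (simp add: mat_form_linear)
  have b_w: "mat_form B (\<lambda>r. (\<Sum>i<j. U i j * p i r) + (\<Sum>l<j. ((U j j - U l l) * \<alpha> l) * e l r)) y
      = (\<Sum>i<j. U i j * mat_form B (p i) y) + U j j * (\<Sum>l<j. \<alpha> l * mat_form B (e l) y)
        - (\<Sum>l<j. \<alpha> l * (U l l * mat_form B (e l) y))"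
    by (simp add: mat_form_linear algebra_simps sum_distrib_left sum_subtractf)
  show ?thesis by (simp only: a_x b_x b_w) (simp add: algebra_simps)
qed

(* Symmetry of A makes the residual B-orthogonal to the earlier eigenvectors; lying in their span,
   it vanishes. *)
lemma eigenvector_of_residual_in_span:
  assumes A: "A \<in> carrier_mat n n" "transpose_mat A = A" and B: "pos_def_mat n B"
    and e: "orth_eigenvectors A B \<mu> j e" and orth: "\<And>l. l < j \<Longrightarrow> mat_form B x (e l) = 0"
    and w: "in_prefix_span n e j w" and residual: "\<And>y. mat_form A x y - c * mat_form B x y = mat_form B w y"
  shows "mat_form A x y = c * mat_form B x y"
proof -
  have Bc: "B \<in> carrier_mat n n" and Bsym: "transpose_mat B = B"
    using B unfolding pos_def_mat_def by auto
  have "mat_form B w (e l) = 0" if l: "l < j" for l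
  proof -
    have "mat_form A x (e l) = \<mu> l * mat_form B x (e l)"
      using e l mat_form_commute[OF A] mat_form_commute[OF Bc Bsym]
      unfolding orth_eigenvectors_def by metis
    then show ?thesis using residual[of "e l"] orth[OF l] by simp
  qed
  then have "mat_form B w y = 0" by (rule in_prefix_span_orthogonal_zero[OF B w])
  then show ?thesis using residual[of y] by simp
qed

lemma orth_eigenvectors_extend:
  assumes A: "A \<in> carrier_mat n n" "transpose_mat A = A" and B: "pos_def_mat n B"
    and tri: "\<And>y. mat_form A (p j) y = (\<Sum>i\<le>j. U i j * mat_form B (p i) y)"
    and indep: "\<not> in_prefix_span n p j (p j)"
    and e: "orth_eigenvectors A B (\<lambda>l. U l l) j e"
    and e_span: "\<And>l. l < j \<Longrightarrow> in_prefix_span n p j (e l)"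
    and p_span: "\<And>i. i < j \<Longrightarrow> in_prefix_span n e j (p i)"
  defines "\<alpha> \<equiv> \<lambda>l. mat_form B (p j) (e l) / mat_form B (e l) (e l)"
  defines "x \<equiv> \<lambda>r. p j r - (\<Sum>l<j. \<alpha> l * e l r)"
  shows "orth_eigenvectors A B (\<lambda>l. U l l) (Suc j) (e(j := x))"
    and "\<And>l. l < Suc j \<Longrightarrow> in_prefix_span n p (Suc j) ((e(j := x)) l)"
    and "\<And>i. i < Suc j \<Longrightarrow> in_prefix_span n (e(j := x)) (Suc j) (p i)"
proof -
  have Bc: "B \<in> carrier_mat n n" and Bsym: "transpose_mat B = B"
    using B unfolding pos_def_mat_def by auto
  from e have orth: "\<And>l l'. l < j \<Longrightarrow> l' < j \<Longrightarrow> l \<noteq> l' \<Longrightarrow> mat_form B (e l) (e l') = 0"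
    and pos: "\<And>l. l < j \<Longrightarrow> 0 < mat_form B (e l) (e l)"
    and eig: "\<And>l y. l < j \<Longrightarrow> mat_form A (e l) y = U l l * mat_form B (e l) y"
    unfolding orth_eigenvectors_def by auto
  have x_orth: "mat_form B x (e l) = 0" if "l < j" for l
    unfolding x_def \<alpha>_def by (rule gram_schmidt_orthogonal[OF orth pos that])
  have x_orth': "mat_form B (e l) x = 0" if "l < j" for l
    using x_orth[OF that] mat_form_commute[OF Bc Bsym] by metis
  have x_pos: "0 < mat_form B x x"
  proof (rule mat_form_pos[OF B], rule ccontr)
    assume "\<not> (\<exists>r<n. x r \<noteq> 0)"
    then have "in_prefix_span n p j (p j) \<longleftrightarrow> in_prefix_span n p j (\<lambda>r. \<Sum>l<j. \<alpha> l * e l r)"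
      unfolding x_def by (intro in_prefix_span_cong) auto
    moreover have "in_prefix_span n p j (\<lambda>r. \<Sum>l<j. \<alpha> l * e l r)"
      using e_span by (intro in_prefix_span_lincomb) auto
    ultimately show False using indep by blast
  qed
  have "in_prefix_span n e j (\<lambda>r. (\<Sum>i<j. U i j * p i r) + (\<Sum>l<j. ((U j j - U l l) * \<alpha> l) * e l r))"
    using p_span by (intro in_prefix_span_add in_prefix_span_lincomb in_prefix_span_comb) auto
  then have x_eig: "mat_form A x y = U j j * mat_form B x y" for y
    using gram_schmidt_residual[OF tri eig] unfolding x_def
    by (intro eigenvector_of_residual_in_span[OF A B e x_orth[unfolded x_def]]) auto
  show "orth_eigenvectors A B (\<lambda>l. U l l) (Suc j) (e(j := x))"
    unfolding orth_eigenvectors_def less_Suc_eq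
    using orth pos eig x_orth x_orth' x_pos x_eig by auto
  show "in_prefix_span n p (Suc j) ((e(j := x)) l)" if "l < Suc j" for l
    using gram_schmidt_spans(1)[OF e_span p_span that] unfolding x_def .
  show "in_prefix_span n (e(j := x)) (Suc j) (p i)" if "i < Suc j" for i
    using gram_schmidt_spans(2)[OF e_span p_span that] unfolding x_def .
qed

lemma gen_eigenbasis_of_triangular:
  assumes A: "A \<in> carrier_mat n n" "transpose_mat A = A" and B: "pos_def_mat n B"
    and tri: "\<And>j y. j < n \<Longrightarrow> mat_form A (p j) y = (\<Sum>i\<le>j. U i j * mat_form B (p i) y)"
    and indep: "\<And>j. j < n \<Longrightarrow> \<not> in_prefix_span n p j (p j)"
    and span: "\<And>z. in_prefix_span n p n z"
  obtains e where "gen_eigenbasis n A B (\<lambda>l. U l l) e"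
proof -
  have "\<exists>e. orth_eigenvectors A B (\<lambda>l. U l l) j e \<and> (\<forall>l<j. in_prefix_span n p j (e l))
      \<and> (\<forall>i<j. in_prefix_span n e j (p i))" if "j \<le> n" for j
    using that
  proof (induction j)
    case 0
    show ?case by (simp add: orth_eigenvectors_def)
  next
    case (Suc j)
    then have j: "j < n" by simp
    from Suc obtain e where e: "orth_eigenvectors A B (\<lambda>l. U l l) j e"
      and "\<And>l. l < j \<Longrightarrow> in_prefix_span n p j (e l)" "\<And>i. i < j \<Longrightarrow> in_prefix_span n e j (p i)"
      by auto
    from orth_eigenvectors_extend[OF A B tri[OF j] indep[OF j] this] show ?case by blast
  qed
  from this[OF order_refl] obtain e where e: "orth_eigenvectors A B (\<lambda>l. U l l) n e"
    and p_span: "\<forall>i<n. in_prefix_span n e n (p i)"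
    by blast
  have "in_prefix_span n e n z" for z
    using p_span span by (intro in_prefix_span_trans[of n n e n p z]) auto
  with e show thesis using that unfolding gen_eigenbasis_def by blast
qed

lemma gen_eigenbasis_cong:
  assumes "gen_eigenbasis n A B \<mu> e" "\<And>l. l < n \<Longrightarrow> \<mu> l = \<mu>' l"
  shows "gen_eigenbasis n A B \<mu>' e"
  using assms unfolding gen_eigenbasis_def orth_eigenvectors_def by auto

lemma pos_def_mat_det_nonzero:
  assumes "pos_def_mat n B"
  shows "det B \<noteq> 0"
proof
  have B: "B \<in> carrier_mat n n" using assms unfolding pos_def_mat_def by auto
  assume "det B = 0"
  then obtain x where x: "x \<in> carrier_vec n" "x \<noteq> 0\<^sub>v n" "B *\<^sub>v x = 0\<^sub>v n"
    using det_0_iff_vec_prod_zero[OF B] by auto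
  then have "0 < x \<bullet> (B *\<^sub>v x)" using assms unfolding pos_def_mat_def by auto
  with x show False by simp
qed

lemma char_poly_of_pencil:
  fixes A B F :: "real mat"
  assumes A: "A \<in> carrier_mat n n" and B: "B \<in> carrier_mat n n" and F: "F \<in> carrier_mat n n"
    and BF: "B * F = A" and dB: "det B \<noteq> 0"
    and det: "\<And>t. det (A - t \<cdot>\<^sub>m B) = det B * (\<Prod>k\<in>{1..n}. \<nu> k - t)"
  shows "char_poly F = (\<Prod>e\<leftarrow>map \<nu> [1..<Suc n]. [:- e, 1:])"
proof (rule poly_eq_poly_eq_iff[THEN iffD1], rule ext)
  fix t :: real
  have cm: "char_matrix F t \<in> carrier_mat n n" using F by (simp add: char_matrix_def)
  have "B * char_matrix F t = A - t \<cdot>\<^sub>m B"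
    unfolding char_matrix_def BF[symmetric] using B F
    by (simp add: mult_add_distrib_mat[of B n n] mult_smult_distrib[of B n n "1\<^sub>m n" n])
      (rule eq_matI, auto)
  moreover have "B * (- char_matrix F t) = - (B * char_matrix F t)"
    by (rule uminus_mult_right_mat) (use B cm in auto)
  ultimately have "B * (- char_matrix F t) = (- 1) \<cdot>\<^sub>m (A - t \<cdot>\<^sub>m B)"
    using A B by (auto intro!: eq_matI)
  then have "det B * det (- char_matrix F t) = (- 1) ^ n * det (A - t \<cdot>\<^sub>m B)"
    using A B cm by (simp add: det_mult[symmetric, of B n])
  with det dB have "det (- char_matrix F t) = (- 1) ^ n * (\<Prod>k\<in>{1..n}. \<nu> k - t)"
    by simp
  also have "\<dots> = (\<Prod>k\<in>{1..n}. (- 1) * (\<nu> k - t))"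
    by (simp only: prod.distrib prod_constant card_atLeastAtMost) simp
  also have "\<dots> = (\<Prod>k\<leftarrow>[1..<Suc n]. t - \<nu> k)"
    using prod.distinct_set_conv_list[of "[1..<Suc n]" "\<lambda>k. t - \<nu> k"]
    by (simp add: atLeastLessThanSuc_atLeastAtMost del: upt_Suc)
  also have "\<dots> = poly (\<Prod>e\<leftarrow>map \<nu> [1..<Suc n]. [:- e, 1:]) t"
    by (simp add: poly_prod_list comp_def del: upt_Suc)
  finally show "poly (char_poly F) t = poly (\<Prod>e\<leftarrow>map \<nu> [1..<Suc n]. [:- e, 1:]) t"
    unfolding char_poly_matrix[OF F] .
qed

lemma schur_pencil:
  fixes A B :: "real mat"
  assumes A: "A \<in> carrier_mat n n" and B: "pos_def_mat n B"
    and det: "\<And>t. det (A - t \<cdot>\<^sub>m B) = det B * (\<Prod>k\<in>{1..n}. \<nu> k - t)"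
  obtains P U Q where "P \<in> carrier_mat n n" "U \<in> carrier_mat n n" "Q \<in> carrier_mat n n"
    "A * P = B * P * U" "Q * P = 1\<^sub>m n" "P * Q = 1\<^sub>m n" "upper_triangular U"
    "\<And>i. i < n \<Longrightarrow> U $$ (i, i) = \<nu> (Suc i)"
proof -
  have Bc: "B \<in> carrier_mat n n" using B unfolding pos_def_mat_def by auto
  have dB: "det B \<noteq> 0" using B by (rule pos_def_mat_det_nonzero)
  obtain Bi where Bi: "Bi \<in> carrier_mat n n" "B * Bi = 1\<^sub>m n"
    using det_non_zero_imp_unit[OF Bc dB, of "()"] unfolding Units_def ring_mat_def by auto
  define F where "F = Bi * A"
  have F: "F \<in> carrier_mat n n" unfolding F_def using Bi A by auto
  have BF: "B * F = A"
    unfolding F_def using Bc Bi A by (simp add: assoc_mult_mat[symmetric, of B n n Bi n A n])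
  obtain U P Q where sd: "schur_decomposition F (map \<nu> [1..<Suc n]) = (U, P, Q)"
    by (cases "schur_decomposition F (map \<nu> [1..<Suc n])") auto
  from schur_decomposition[OF F char_poly_of_pencil[OF A Bc F BF dB det] sd]
  have sim: "similar_mat_wit F U P Q" and ut: "upper_triangular U"
    and diag: "diag_mat U = map \<nu> [1..<Suc n]"
    by auto
  from sim F have U: "U \<in> carrier_mat n n" and P: "P \<in> carrier_mat n n" and Q: "Q \<in> carrier_mat n n"
    and PQ: "P * Q = 1\<^sub>m n" and QP: "Q * P = 1\<^sub>m n" and FPUQ: "F = P * U * Q"
    unfolding similar_mat_wit_def Let_def by auto
  have "F * P = P * U * (Q * P)"
    unfolding FPUQ by (rule assoc_mult_mat[of "P * U" n n Q n P n]) (use P U Q in auto)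
  then have FP: "F * P = P * U" unfolding QP using P U by simp
  have AP: "A * P = B * P * U"
    unfolding BF[symmetric] using Bc F P U
    by (simp add: assoc_mult_mat[of B n n F n P n] FP assoc_mult_mat[of B n n P n U n])
  have "U $$ (i, i) = \<nu> (Suc i)" if "i < n" for i
    using arg_cong[OF diag, of "\<lambda>xs. xs ! i"] U that by (simp add: diag_mat_def del: upt_Suc)
  then show thesis by (rule that[OF P U Q AP QP PQ ut])
qed

lemma index_mult_mat_sum:
  fixes X Y :: "real mat"
  assumes "X \<in> carrier_mat n n" "Y \<in> carrier_mat n n" "i < n" "j < n"
  shows "(X * Y) $$ (i, j) = (\<Sum>k<n. X $$ (i, k) * Y $$ (k, j))"
  using assms by (simp add: scalar_prod_def atLeast0LessThan)

lemma mat_form_col: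
  fixes C P :: "real mat"
  assumes C: "C \<in> carrier_mat n n" "transpose_mat C = C" and P: "P \<in> carrier_mat n n" and j: "j < n"
  shows "mat_form C (\<lambda>r. P $$ (r, j)) y = (\<Sum>r<n. (C * P) $$ (r, j) * y r)"
proof -
  have "mat_form C (\<lambda>r. P $$ (r, j)) y = mat_form C y (\<lambda>r. P $$ (r, j))"
    by (rule mat_form_commute[OF C])
  also have "\<dots> = (\<Sum>r<n. y r * (\<Sum>s<n. C $$ (r, s) * P $$ (s, j)))"
    using C unfolding mat_form_def by (simp add: sum_distrib_left mult.assoc)
  also have "\<dots> = (\<Sum>r<n. (C * P) $$ (r, j) * y r)"
    using C P j by (intro sum.cong refl) (simp add: scalar_prod_def atLeast0LessThan mult.commute)
  finally show ?thesis .
qed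

lemma schur_columns_triangular:
  fixes A B P U :: "real mat"
  assumes A: "A \<in> carrier_mat n n" "transpose_mat A = A"
    and B: "B \<in> carrier_mat n n" "transpose_mat B = B"
    and P: "P \<in> carrier_mat n n" and U: "U \<in> carrier_mat n n"
    and AP: "A * P = B * P * U" and ut: "upper_triangular U" and j: "j < n"
  shows "mat_form A (\<lambda>r. P $$ (r, j)) y = (\<Sum>i\<le>j. U $$ (i, j) * mat_form B (\<lambda>r. P $$ (r, i)) y)"
proof -
  have BP: "B * P \<in> carrier_mat n n" using B P by simp
  have "mat_form A (\<lambda>r. P $$ (r, j)) y = (\<Sum>r<n. (B * P * U) $$ (r, j) * y r)"
    using mat_form_col[OF A P j] AP by simp
  also have "\<dots> = (\<Sum>r<n. \<Sum>i<n. (B * P) $$ (r, i) * U $$ (i, j) * y r)"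
    using index_mult_mat_sum[OF BP U _ j] by (intro sum.cong refl) (simp add: sum_distrib_right)
  also have "\<dots> = (\<Sum>i<n. U $$ (i, j) * (\<Sum>r<n. (B * P) $$ (r, i) * y r))"
    by (subst sum.swap) (simp add: sum_distrib_left mult_ac)
  also have "\<dots> = (\<Sum>i\<le>j. U $$ (i, j) * (\<Sum>r<n. (B * P) $$ (r, i) * y r))"
    using ut U j by (intro sum.mono_neutral_right) (auto simp: upper_triangular_def)
  also have "\<dots> = (\<Sum>i\<le>j. U $$ (i, j) * mat_form B (\<lambda>r. P $$ (r, i)) y)"
    using j by (intro sum.cong refl) (simp add: mat_form_col[OF B P])
  finally show ?thesis .
qed

lemma sum_one_mat:
  assumes "r < n"
  shows "(\<Sum>s<n. (1\<^sub>m n :: real mat) $$ (r, s) * z s) = z r"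
proof -
  have "(\<Sum>s<n. (1\<^sub>m n :: real mat) $$ (r, s) * z s) = (\<Sum>s<n. if r = s then z s else 0)"
    using assms by (intro sum.cong) auto
  then show ?thesis using assms by simp
qed

lemma left_inverse_columns_indep:
  fixes P Q :: "real mat"
  assumes P: "P \<in> carrier_mat n n" and Q: "Q \<in> carrier_mat n n" and QP: "Q * P = 1\<^sub>m n"
    and j: "j < n"
  shows "\<not> in_prefix_span n (\<lambda>i r. P $$ (r, i)) j (\<lambda>r. P $$ (r, j))"
proof
  assume "in_prefix_span n (\<lambda>i r. P $$ (r, i)) j (\<lambda>r. P $$ (r, j))"
  then obtain c where c: "\<forall>r<n. P $$ (r, j) = (\<Sum>i<j. c i * P $$ (r, i))"
    unfolding in_prefix_span_def by blast
  have "1 = (Q * P) $$ (j, j)" using QP j by simp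
  also have "\<dots> = (\<Sum>r<n. Q $$ (j, r) * (\<Sum>i<j. c i * P $$ (r, i)))"
    using P Q j c by (simp add: scalar_prod_def atLeast0LessThan)
  also have "\<dots> = (\<Sum>r<n. \<Sum>i<j. c i * (Q $$ (j, r) * P $$ (r, i)))"
    by (simp add: sum_distrib_left mult_ac)
  also have "\<dots> = (\<Sum>i<j. c i * (\<Sum>r<n. Q $$ (j, r) * P $$ (r, i)))"
    by (subst sum.swap) (simp add: sum_distrib_left)
  also have "\<dots> = (\<Sum>i<j. c i * (Q * P) $$ (j, i))"
    using P Q j by (intro sum.cong refl) (simp add: scalar_prod_def atLeast0LessThan)
  also have "\<dots> = 0" using QP j by simp
  finally show False by simp
qed

lemma right_inverse_columns_span:
  fixes P Q :: "real mat"
  assumes P: "P \<in> carrier_mat n n" and Q: "Q \<in> carrier_mat n n" and PQ: "P * Q = 1\<^sub>m n"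
  shows "in_prefix_span n (\<lambda>i r. P $$ (r, i)) n z"
proof -
  have z: "z r = (\<Sum>i<n. (\<Sum>s<n. Q $$ (i, s) * z s) * P $$ (r, i))" if r: "r < n" for r
  proof -
    have "z r = (\<Sum>s<n. (P * Q) $$ (r, s) * z s)" unfolding PQ using r by (rule sum_one_mat[symmetric])
    also have "\<dots> = (\<Sum>s<n. \<Sum>i<n. P $$ (r, i) * Q $$ (i, s) * z s)"
      using P Q r by (intro sum.cong refl) (simp add: scalar_prod_def atLeast0LessThan sum_distrib_right)
    also have "\<dots> = (\<Sum>i<n. (\<Sum>s<n. Q $$ (i, s) * z s) * P $$ (r, i))"
      by (subst sum.swap) (simp add: sum_distrib_left sum_distrib_right mult_ac)
    finally show ?thesis .
  qed
  show ?thesis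
    unfolding in_prefix_span_def by (rule exI[of _ "\<lambda>i. \<Sum>s<n. Q $$ (i, s) * z s"]) (use z in blast)
qed

lemma gen_eigenbasis_exists:
  fixes A B :: "real mat"
  assumes A: "A \<in> carrier_mat n n" "transpose_mat A = A" and B: "pos_def_mat n B"
    and det: "\<And>t. det (A - t \<cdot>\<^sub>m B) = det B * (\<Prod>k\<in>{1..n}. \<nu> k - t)"
  obtains e where "gen_eigenbasis n A B (\<lambda>l. \<nu> (Suc l)) e"
proof -
  have Bc: "B \<in> carrier_mat n n" and Bsym: "transpose_mat B = B"
    using B unfolding pos_def_mat_def by auto
  obtain P U Q where P: "P \<in> carrier_mat n n" and U: "U \<in> carrier_mat n n" and Q: "Q \<in> carrier_mat n n"
    and AP: "A * P = B * P * U" and QP: "Q * P = 1\<^sub>m n" and PQ: "P * Q = 1\<^sub>m n"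
    and ut: "upper_triangular U" and diag: "\<And>i. i < n \<Longrightarrow> U $$ (i, i) = \<nu> (Suc i)"
    using schur_pencil[OF A(1) B det] by blast
  obtain e where "gen_eigenbasis n A B (\<lambda>l. U $$ (l, l)) e"
  proof (rule gen_eigenbasis_of_triangular[OF A B])
    show "mat_form A (\<lambda>r. P $$ (r, j)) y = (\<Sum>i\<le>j. U $$ (i, j) * mat_form B (\<lambda>r. P $$ (r, i)) y)"
      if "j < n" for j y
      by (rule schur_columns_triangular[OF A Bc Bsym P U AP ut that])
    show "\<not> in_prefix_span n (\<lambda>i r. P $$ (r, i)) j (\<lambda>r. P $$ (r, j))" if "j < n" for j
      by (rule left_inverse_columns_indep[OF P Q QP that])
    show "in_prefix_span n (\<lambda>i r. P $$ (r, i)) n z" for z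
      by (rule right_inverse_columns_span[OF P Q PQ])
  qed
  then have "gen_eigenbasis n A B (\<lambda>l. \<nu> (Suc l)) e"
    by (rule gen_eigenbasis_cong) (simp add: diag)
  then show thesis by (rule that)
qed

lemma gen_eigenvalues_sortedD:
  assumes "gen_eigenvalues_sorted n P Q \<mu>"
  shows "\<And>k. 1 \<le> k \<Longrightarrow> k < n \<Longrightarrow> \<mu> k \<le> \<mu> (Suc k)"
    and "\<And>t. det (P - t \<cdot>\<^sub>m Q) = det Q * (\<Prod>k\<in>{1..n}. \<mu> k - t)"
  using assms unfolding gen_eigenvalues_sorted_def by simp_all

lemma gen_eigenvalues_sorted_mono:
  assumes "gen_eigenvalues_sorted n P Q \<mu>" "1 \<le> i" "i \<le> j" "j \<le> n"
  shows "\<mu> i \<le> \<mu> j"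
  using gen_eigenvalues_sortedD(1)[OF assms(1)] assms(2-4)
  by (rule lift_Suc_mono_le_interval[where a = 1 and b = n])

section \<open>Rayleigh quotient bounds\<close>

lemma gen_eigenbasis_expansion:
  fixes a :: "nat \<Rightarrow> real"
  assumes e: "gen_eigenbasis n A B \<mu> e" and L: "L \<subseteq> {..<n}"
  defines "z \<equiv> \<lambda>r. \<Sum>l\<in>L. a l * e l r"
  shows "mat_form A z z - t * mat_form B z z = (\<Sum>l\<in>L. (a l)\<^sup>2 * (\<mu> l - t) * mat_form B (e l) (e l))"
proof -
  from e have orth: "\<And>l l'. l < n \<Longrightarrow> l' < n \<Longrightarrow> l \<noteq> l' \<Longrightarrow> mat_form B (e l) (e l') = 0"
    and eig: "\<And>l y. l < n \<Longrightarrow> mat_form A (e l) y = \<mu> l * mat_form B (e l) y"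
    unfolding gen_eigenbasis_def orth_eigenvectors_def by auto
  have fin: "finite L" using L finite_subset by blast
  have cross: "mat_form B (e l) z = a l * mat_form B (e l) (e l)" if l: "l \<in> L" for l
  proof -
    have "mat_form B (e l) z = (\<Sum>l'\<in>L. a l' * mat_form B (e l) (e l'))"
      unfolding z_def by (simp only: mat_form_sum_right mat_form_scale_right)
    also have "\<dots> = a l * mat_form B (e l) (e l)"
      using l L orth fin by (subst sum.mono_neutral_right[of L "{l}"]) auto
    finally show ?thesis .
  qed
  have "mat_form A z z - t * mat_form B z z = (\<Sum>l\<in>L. a l * (mat_form A (e l) z - t * mat_form B (e l) z))"
    unfolding z_def
    by (simp only: mat_form_sum_left mat_form_scale_left)
      (simp add: sum_distrib_left sum_subtractf algebra_simps)
  also have "\<dots> = (\<Sum>l\<in>L. (a l)\<^sup>2 * (\<mu> l - t) * mat_form B (e l) (e l))"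
    using L eig cross by (intro sum.cong refl) (auto simp: power2_eq_square algebra_simps)
  finally show ?thesis .
qed

lemma sum_sq_weighted_neg:
  fixes a \<mu> d :: "nat \<Rightarrow> real"
  assumes "finite L" "\<And>l. l \<in> L \<Longrightarrow> \<mu> l < t" "\<And>l. l \<in> L \<Longrightarrow> 0 < d l" "\<exists>l\<in>L. a l \<noteq> 0"
  shows "(\<Sum>l\<in>L. (a l)\<^sup>2 * (\<mu> l - t) * d l) < 0"
proof -
  obtain l0 where l0: "l0 \<in> L" "a l0 \<noteq> 0" using assms(4) by blast
  have "0 < (\<Sum>l\<in>L. (a l)\<^sup>2 * (t - \<mu> l) * d l)"
  proof (rule sum_pos2[OF assms(1) l0(1)])
    show "0 < (a l0)\<^sup>2 * (t - \<mu> l0) * d l0" using l0 assms(2,3) by simp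
    show "0 \<le> (a l)\<^sup>2 * (t - \<mu> l) * d l" if "l \<in> L" for l
      using that assms(2,3) by (simp add: less_imp_le)
  qed
  moreover have "(\<Sum>l\<in>L. (a l)\<^sup>2 * (\<mu> l - t) * d l) = - (\<Sum>l\<in>L. (a l)\<^sup>2 * (t - \<mu> l) * d l)"
    by (simp add: sum_negf[symmetric] algebra_simps)
  ultimately show ?thesis by linarith
qed

lemma homogeneous_system_nontrivial:
  fixes c :: "nat \<Rightarrow> nat \<Rightarrow> real"
  shows "\<exists>a. (\<exists>l\<le>k. a l \<noteq> 0) \<and> (\<forall>r<k. (\<Sum>l\<le>k. c r l * a l) = 0)"
proof -
  define G :: "real mat" where "G = mat\<^sub>r (Suc k) (Suc k) (\<lambda>i. if i = k then 0\<^sub>v (Suc k) else vec (Suc k) (c i))"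
  have G: "G \<in> carrier_mat (Suc k) (Suc k)" unfolding G_def by auto
  have "det G = 0" unfolding G_def by (rule det_row_0) auto
  then obtain x where x: "x \<in> carrier_vec (Suc k)" "x \<noteq> 0\<^sub>v (Suc k)" "G *\<^sub>v x = 0\<^sub>v (Suc k)"
    using det_0_iff_vec_prod_zero[OF G] by auto
  have "\<exists>l\<le>k. x $ l \<noteq> 0"
  proof (rule ccontr)
    assume "\<not> ?thesis"
    then have "x = 0\<^sub>v (Suc k)" using x(1) by (intro eq_vecI) (auto simp: less_Suc_eq_le)
    with x(2) show False ..
  qed
  moreover have "(\<Sum>l\<le>k. c r l * x $ l) = 0" if r: "r < k" for r
  proof -
    have "row G r = vec (Suc k) (c r)" unfolding G_def using r by simp
    then have "vec (Suc k) (c r) \<bullet> x = (G *\<^sub>v x) $ r" using G r by simp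
    also have "\<dots> = 0" using x(3) r by simp
    finally show ?thesis
      using x(1) by (simp add: scalar_prod_def atLeast0LessThan lessThan_Suc_atMost)
  qed
  ultimately show ?thesis by (intro exI[of _ "\<lambda>l. x $ l"]) auto
qed

(* Courant-Fischer: k linear constraints leave a nonzero vector in the span of the first k + 1
   eigenvectors. *)
lemma gen_eigenbasis_constrained_below:
  fixes f :: "nat \<Rightarrow> nat \<Rightarrow> real"
  assumes e: "gen_eigenbasis n A B \<mu> e" and k: "k < n" and below: "\<And>l. l \<le> k \<Longrightarrow> \<mu> l < t"
  shows "\<exists>z. (\<forall>r<k. (\<Sum>s<n. f r s * z s) = 0) \<and> mat_form A z z - t * mat_form B z z < 0"
proof -
  obtain a where a_nz: "\<exists>l\<le>k. a l \<noteq> 0"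
    and a_sol: "\<forall>r<k. (\<Sum>l\<le>k. (\<Sum>s<n. f r s * e l s) * a l) = 0"
    using homogeneous_system_nontrivial[of k "\<lambda>r l. \<Sum>s<n. f r s * e l s"] by blast
  define z where "z = (\<lambda>s. \<Sum>l\<in>{..k}. a l * e l s)"
  have "(\<Sum>s<n. f r s * z s) = 0" if "r < k" for r
  proof -
    have "(\<Sum>s<n. f r s * z s) = (\<Sum>s<n. \<Sum>l\<le>k. (f r s * e l s) * a l)"
      unfolding z_def by (simp add: sum_distrib_left mult_ac)
    also have "\<dots> = (\<Sum>l\<le>k. (\<Sum>s<n. f r s * e l s) * a l)"
      by (subst sum.swap) (simp add: sum_distrib_right)
    finally show ?thesis using a_sol that by simp
  qed
  moreover have "mat_form A z z - t * mat_form B z z < 0"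
  proof -
    have "mat_form A z z - t * mat_form B z z = (\<Sum>l\<le>k. (a l)\<^sup>2 * (\<mu> l - t) * mat_form B (e l) (e l))"
      unfolding z_def using k by (intro gen_eigenbasis_expansion[OF e]) auto
    also have "\<dots> < 0"
      using e k below a_nz unfolding gen_eigenbasis_def orth_eigenvectors_def
      by (intro sum_sq_weighted_neg) auto
    finally show ?thesis .
  qed
  ultimately show ?thesis by blast
qed

lemma gen_eigenbasis_below_neg:
  assumes e: "gen_eigenbasis n A B \<mu> e" and A: "A \<in> carrier_mat n n" and B: "B \<in> carrier_mat n n"
    and below: "\<And>l. l < n \<Longrightarrow> \<mu> l < t" and z: "\<exists>r<n. z r \<noteq> 0"
  shows "mat_form A z z - t * mat_form B z z < 0"
proof -
  obtain a where a: "\<forall>r<n. z r = (\<Sum>l<n. a l * e l r)"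
    using e unfolding gen_eigenbasis_def in_prefix_span_def by blast
  have "\<exists>l\<in>{..<n}. a l \<noteq> 0"
  proof (rule ccontr)
    assume "\<not> ?thesis"
    then have "\<forall>r<n. z r = 0" using a by simp
    with z show False by blast
  qed
  moreover have "mat_form A z z - t * mat_form B z z
      = mat_form A (\<lambda>r. \<Sum>l<n. a l * e l r) (\<lambda>r. \<Sum>l<n. a l * e l r)
        - t * mat_form B (\<lambda>r. \<Sum>l<n. a l * e l r) (\<lambda>r. \<Sum>l<n. a l * e l r)"
    using a by (simp add: mat_form_cong[OF A, of z _ z] mat_form_cong[OF B, of z _ z])
  ultimately show ?thesis
    using e below unfolding gen_eigenbasis_expansion[OF e subset_refl]
    unfolding gen_eigenbasis_def orth_eigenvectors_def
    by (auto intro!: sum_sq_weighted_neg)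
qed

lemma gen_eigenbasis_eigenvalue_neg:
  assumes e: "gen_eigenbasis n A B \<mu> e" and B: "B \<in> carrier_mat n n" and l: "l < n"
    and neg: "\<And>z. \<exists>r<n. z r \<noteq> 0 \<Longrightarrow> mat_form A z z < 0"
  shows "\<mu> l < 0"
proof -
  from e l have pos: "0 < mat_form B (e l) (e l)"
    and eig: "mat_form A (e l) (e l) = \<mu> l * mat_form B (e l) (e l)"
    unfolding gen_eigenbasis_def orth_eigenvectors_def by auto
  have "\<mu> l * mat_form B (e l) (e l) < 0"
    using neg[OF mat_form_pos_imp_nonzero[OF B pos]] eig by simp
  with pos show ?thesis by (simp add: mult_less_0_iff)
qed

lemma shifted_pencil_eigenvalues_neg:
  fixes A0 A1 B :: "real mat"
  assumes A0: "A0 \<in> carrier_mat n n" "transpose_mat A0 = A0" and A1: "pos_def_mat n A1"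
    and \<Lambda>: "gen_eigenvalues_sorted n A0 A1 \<Lambda>" and \<rho>: "\<Lambda> n < \<rho>"
    and e: "gen_eigenbasis n (A0 - \<rho> \<cdot>\<^sub>m A1) B \<mu> e" and B: "B \<in> carrier_mat n n" and l: "l < n"
  shows "\<mu> l < 0"
proof (rule gen_eigenbasis_eigenvalue_neg[OF e B l])
  have A1c: "A1 \<in> carrier_mat n n" using A1 unfolding pos_def_mat_def by simp
  obtain e' where e': "gen_eigenbasis n A0 A1 (\<lambda>l. \<Lambda> (Suc l)) e'"
    using gen_eigenbasis_exists[OF A0 A1 gen_eigenvalues_sortedD(2)[OF \<Lambda>]] by blast
  have "\<Lambda> (Suc l) < \<rho>" if "l < n" for l
    using gen_eigenvalues_sorted_mono[OF \<Lambda>, of "Suc l" n] that \<rho> by simp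
  then show "mat_form (A0 - \<rho> \<cdot>\<^sub>m A1) z z < 0" if "\<exists>r<n. z r \<noteq> 0" for z
    using gen_eigenbasis_below_neg[OF e' A0(1) A1c _ that] A0(1) A1c
    by (simp add: mat_form_minus_mat[of _ n] mat_form_smult_mat)
qed

(* Hypotheses (A1)-(A3) of the theorem. *)
locale eigenpair_expansion =
  fixes M N :: "'d::real_vector \<Rightarrow> 'd \<Rightarrow> real" and lam :: "nat \<Rightarrow> real" and phi :: "nat \<Rightarrow> 'd"
    and bG :: "'x::real_vector \<Rightarrow> 'x \<Rightarrow> real" and T :: "'d \<Rightarrow> 'x"
  assumes M_bilinear: "bilinear_form M" and M_symmetric: "symmetric_form M"
    and M_pos: "\<And>u. u \<noteq> 0 \<Longrightarrow> 0 < M u u"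
    and N_bilinear: "bilinear_form N" and N_symmetric: "symmetric_form N"
    and lam_mono: "\<And>i. 1 \<le> i \<Longrightarrow> lam i \<le> lam (Suc i)"
    and eigenpair: "\<And>i u. 1 \<le> i \<Longrightarrow> M (phi i) u = lam i * N (phi i) u"
    and orthonormal: "\<And>i j. 1 \<le> i \<Longrightarrow> 1 \<le> j \<Longrightarrow> M (phi i) (phi j) = (if i = j then 1 else 0)"
    and expansion: "\<And>u. (\<lambda>i. lam (Suc i) * \<bar>N u (phi (Suc i))\<bar>^2) sums N u u"
    and bG_bilinear: "bilinear_form bG" and bG_symmetric: "symmetric_form bG"
    and bG_nonneg: "\<And>x. 0 \<le> bG x x"
    and T_isometry: "\<And>u u'. bG (T u) (T u') = M u u'"
begin

lemma M_nonneg: "0 \<le> M u u"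
  using M_pos[of u] bilinear_form_zero_left[OF M_bilinear, of 0] by (cases "u = 0") auto

lemma M_phi:
  assumes "1 \<le> i"
  shows "M x (phi i) = lam i * N x (phi i)"
  using eigenpair[OF assms, of x] M_symmetric N_symmetric unfolding symmetric_form_def by metis

lemma lam_mono_le: "1 \<le> i \<Longrightarrow> i \<le> j \<Longrightarrow> lam i \<le> lam j"
  by (rule lift_Suc_mono_le_interval[where a = 1 and b = j]) (auto intro: lam_mono)

lemma bessel_M: "(\<Sum>i<K. (M x (phi (Suc i)))\<^sup>2) \<le> M x x"
  by (rule bessel_inequality[OF M_bilinear M_symmetric M_nonneg]) (simp add: orthonormal)

lemma bessel_bG: "(\<Sum>i<K. (bG y (T (phi (Suc i))))\<^sup>2) \<le> bG y y"
  by (rule bessel_inequality[OF bG_bilinear bG_symmetric bG_nonneg]) (simp add: T_isometry orthonormal)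

lemma gap_quadratic_nonneg:
  assumes adjoint: "\<And>u. bG y (T u) = N x u"
    and t: "t \<le> 0" and \<rho>: "0 < \<rho>"
    and below: "(1 - t) * lam j + t * \<rho> \<le> 0"
    and gap: "\<And>i. j < i \<Longrightarrow> i \<le> m \<Longrightarrow> N x (phi i) = 0"
    and above: "\<rho> \<le> lam (Suc m)"
  shows "0 \<le> (1 - t) * M x x - \<rho> * (1 - 2 * t) * N x x - t * \<rho>\<^sup>2 * bG y y"
proof -
  define c where "c i = N x (phi (Suc i))" for i
  have "0 \<le> (c i)\<^sup>2 * ((1 - t) * (lam (Suc i))\<^sup>2 + (- \<rho> * (1 - 2 * t)) * lam (Suc i) + (- t * \<rho>\<^sup>2))"
    for i
  proof -
    let ?l = "lam (Suc i)"
    have "(1 - t) * ?l\<^sup>2 + (- \<rho> * (1 - 2 * t)) * ?l + (- t * \<rho>\<^sup>2) = (?l - \<rho>) * ((1 - t) * ?l + t * \<rho>)"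
      by (simp add: algebra_simps power2_eq_square)
    moreover have "c i = 0 \<or> 0 \<le> (?l - \<rho>) * ((1 - t) * ?l + t * \<rho>)"
    proof (cases "Suc i \<le> m")
      case True
      with gap have "Suc i \<le> j \<or> c i = 0" unfolding c_def by (meson not_le)
      moreover have "Suc i \<le> j \<Longrightarrow> ?l \<le> lam j" by (rule lam_mono_le) simp
      ultimately show ?thesis using gap_factor_nonneg[OF t \<rho>, of ?l "lam j"] below by blast
    next
      case False
      then have "\<rho> \<le> ?l" using above lam_mono_le[of "Suc m" "Suc i"] by simp
      then show ?thesis using gap_factor_nonneg[OF t \<rho>] by blast
    qed
    ultimately show ?thesis by auto
  qed
  then have "0 \<le> (1 - t) * M x x + (- \<rho> * (1 - 2 * t)) * N x x + (- t * \<rho>\<^sup>2) * bG y y"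
  proof (rule weighted_series_nonneg[rotated 5])
    show "(\<lambda>i. lam (Suc i) * (c i)\<^sup>2) sums N x x" using expansion[of x] by (simp add: c_def)
    show "(\<Sum>i<K. (lam (Suc i) * c i)\<^sup>2) \<le> M x x" for K
      using bessel_M[where x = x and K = K] by (simp add: M_phi c_def)
    show "(\<Sum>i<K. (c i)\<^sup>2) \<le> bG y y" for K
      using bessel_bG[where y = y and K = K] by (simp add: adjoint c_def)
    show "0 \<le> 1 - t" using t by simp
    show "0 \<le> - t * \<rho>\<^sup>2" using t by (simp add: mult_nonpos_nonneg)
  qed
  then show ?thesis by (simp add: algebra_simps)
qed

lemma eigenvalue_lower_bound:
  fixes n :: nat and v :: "nat \<Rightarrow> 'd" and w :: "nat \<Rightarrow> 'x" and \<rho> :: real and \<nu> :: "nat \<Rightarrow> real"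
  defines "A0 \<equiv> mat n n (\<lambda>(i, j). M (v i) (v j))" and "A1 \<equiv> mat n n (\<lambda>(i, j). N (v i) (v j))"
    and "A2 \<equiv> mat n n (\<lambda>(i, j). bG (w i) (w j))"
  defines "A \<equiv> A0 - \<rho> \<cdot>\<^sub>m A1" and "B \<equiv> A0 - (2 * \<rho>) \<cdot>\<^sub>m A1 + \<rho>\<^sup>2 \<cdot>\<^sub>m A2"
  assumes e: "gen_eigenbasis n A B (\<lambda>l. \<nu> (Suc l)) e"
    and adjoint: "\<And>i u. i < n \<Longrightarrow> bG (w i) (T u) = N (v i) u"
    and \<rho>: "0 < \<rho>" and m: "n \<le> m" "\<rho> \<le> lam (Suc m)"
    and k: "1 \<le> k" "k \<le> n" and sorted: "\<And>l. 1 \<le> l \<Longrightarrow> l \<le> k \<Longrightarrow> \<nu> l \<le> \<nu> k"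
    and neg: "\<nu> k < 0"
  shows "\<rho> - \<rho> / (1 - \<nu> k) \<le> lam (m + 1 - k)"
proof (rule ccontr)
  assume "\<not> ?thesis"
  with neg have "(1 - \<nu> k) * lam (m + 1 - k) + \<nu> k * \<rho> < 0" by (simp add: field_simps)
  with neg obtain t where t: "\<nu> k < t" "t < 0" "(1 - t) * lam (m + 1 - k) + t * \<rho> < 0"
    by (rule affine_neg_persists_right)
  have below: "\<nu> (Suc l) < t" if "l \<le> k - 1" for l
  proof -
    have "Suc l \<le> k" using that k by linarith
    then show ?thesis using sorted[of "Suc l"] t(1) by simp
  qed
  from k have "k - 1 < n" by simp
  from gen_eigenbasis_constrained_below[OF e this below, of "\<lambda>r s. N (v s) (phi (m + 2 - k + r))"]
  obtain z where constr: "\<forall>r<k - 1. (\<Sum>s<n. N (v s) (phi (m + 2 - k + r)) * z s) = 0"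
    and quad_neg: "mat_form A z z - t * mat_form B z z < 0"
    by blast
  define x where "x = lin_comb n z v"
  have N_x: "N x u = (\<Sum>s<n. N (v s) u * z s)" for u
    unfolding x_def lin_comb_def bilinear_form_sum_left[OF N_bilinear] by (simp add: mult.commute)
  have "0 \<le> (1 - t) * M x x - \<rho> * (1 - 2 * t) * N x x - t * \<rho>\<^sup>2 * bG (lin_comb n z w) (lin_comb n z w)"
  proof (rule gap_quadratic_nonneg[where j = "m + 1 - k" and m = m])
    show "bG (lin_comb n z w) (T u) = N x u" for u
      unfolding x_def using bG_bilinear N_bilinear adjoint by (rule lin_comb_adjoint)
    show "N x (phi i) = 0" if "m + 1 - k < i" "i \<le> m" for i
    proof -
      define r where "r = i - (m + 2 - k)"
      have r: "r < k - 1" "m + 2 - k + r = i" using that k m(1) unfolding r_def by auto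
      show ?thesis using constr[rule_format, OF r(1)] unfolding r(2) by (simp add: N_x)
    qed
  qed (use t \<rho> m in auto)
  with quad_neg show False
    unfolding x_def A_def B_def A0_def A1_def A2_def gram_pencil_form[OF M_bilinear N_bilinear bG_bilinear]
    by linarith
qed

lemma gram_pencil_bounds:
  fixes n :: nat and v :: "nat \<Rightarrow> 'd" and w :: "nat \<Rightarrow> 'x" and \<rho> :: real and \<nu> :: "nat \<Rightarrow> real"
  defines "A0 \<equiv> mat n n (\<lambda>(i, j). M (v i) (v j))" and "A1 \<equiv> mat n n (\<lambda>(i, j). N (v i) (v j))"
    and "A2 \<equiv> mat n n (\<lambda>(i, j). bG (w i) (w j))"
  defines "A \<equiv> A0 - \<rho> \<cdot>\<^sub>m A1" and "B \<equiv> A0 - (2 * \<rho>) \<cdot>\<^sub>m A1 + \<rho>\<^sup>2 \<cdot>\<^sub>m A2"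
  assumes B: "pos_def_mat n B"
    and \<nu>: "gen_eigenvalues_sorted n A B \<nu>"
    and adjoint: "\<And>i u. i < n \<Longrightarrow> bG (w i) (T u) = N (v i) u"
    and \<rho>: "0 < \<rho>" and m: "n \<le> m" "\<rho> \<le> lam (m + 1)"
  shows "\<And>k. k \<in> {1..n} \<Longrightarrow> \<nu> k < 0 \<Longrightarrow> \<rho> - \<rho> / (1 - \<nu> k) \<le> lam (m + 1 - k)"
    and "\<And>k \<Lambda>. pos_def_mat n A1 \<Longrightarrow> gen_eigenvalues_sorted n A0 A1 \<Lambda> \<Longrightarrow> \<Lambda> n < \<rho> \<Longrightarrow> k \<in> {1..n}
      \<Longrightarrow> \<nu> k < 0"
proof -
  have carrier: "A0 \<in> carrier_mat n n" "A1 \<in> carrier_mat n n"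
    unfolding A0_def A1_def by auto
  have A0_sym: "transpose_mat A0 = A0"
    unfolding A0_def by (rule gram_transpose[OF M_symmetric])
  have A1_sym: "transpose_mat A1 = A1"
    unfolding A1_def by (rule gram_transpose[OF N_symmetric])
  have A: "A \<in> carrier_mat n n" "transpose_mat A = A"
    unfolding A_def using carrier A0_sym A1_sym by (simp_all add: minus_carrier_mat transpose_minus transpose_smult_mat)
  have Bc: "B \<in> carrier_mat n n"
    using B unfolding pos_def_mat_def by blast
  obtain e where e: "gen_eigenbasis n A B (\<lambda>l. \<nu> (Suc l)) e"
    using gen_eigenbasis_exists[OF A B gen_eigenvalues_sortedD(2)[OF \<nu>]] by blast
  show "\<rho> - \<rho> / (1 - \<nu> k) \<le> lam (m + 1 - k)" if "k \<in> {1..n}" "\<nu> k < 0" for k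
    using e unfolding A_def B_def A0_def A1_def A2_def
    by (rule eigenvalue_lower_bound) (use that adjoint \<rho> m gen_eigenvalues_sorted_mono[OF \<nu>] in auto)
  show "\<nu> k < 0" if "pos_def_mat n A1" "gen_eigenvalues_sorted n A0 A1 \<Lambda>" "\<Lambda> n < \<rho>" "k \<in> {1..n}"
    for k \<Lambda>
    using shifted_pencil_eigenvalues_neg[OF carrier(1) A0_sym that(1-3) e[unfolded A_def] Bc, of "k - 1"] that(4) by auto
qed

end

theorem theorem4p4:
  fixes M N :: "'d::real_vector \<Rightarrow> 'd \<Rightarrow> real"
    and lam :: "nat \<Rightarrow> real" and phi :: "nat \<Rightarrow> 'd"
    and bG :: "'x::real_vector \<Rightarrow> 'x \<Rightarrow> real" and T :: "'d \<Rightarrow> 'x"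
    and n :: nat and v :: "nat \<Rightarrow> 'd" and w :: "nat \<Rightarrow> 'x"
    and \<rho> :: real and A0 A1 A2 A B :: "real mat" and \<nu> :: "nat \<Rightarrow> real" and q m :: nat
  assumes A1_M: "bilinear_form M" "symmetric_form M" "\<forall>u. u \<noteq> 0 \<longrightarrow> M u u > 0"
    and A1_N: "bilinear_form N" "symmetric_form N"
    and A2_mono: "\<forall>i\<ge>1. lam i \<le> lam (Suc i)"
    and A2_eig: "\<forall>i\<ge>1. \<forall>u. M (phi i) u = lam i * N (phi i) u"
    and A2_orth: "\<forall>i\<ge>1. \<forall>j\<ge>1. M (phi i) (phi j) = (if i = j then 1 else 0)"
    and A2_exp: "\<forall>u. (\<lambda>i. lam (Suc i) * \<bar>N u (phi (Suc i))\<bar>^2) sums N u u"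
    and A3_bG: "bilinear_form bG" "symmetric_form bG" "\<forall>x. bG x x \<ge> 0"
    and A3_T: "linear T" "\<forall>u u'. bG (T u) (T u') = M u u'"
    and A4: "\<forall>i\<in>{1..n}. \<forall>u. bG (w i) (T u) = N (v i) u"
    and A5_rho: "\<rho> > 0"
    and A5_A0: "A0 = mat n n (\<lambda>(i,j). M (v (Suc i)) (v (Suc j)))"
    and A5_A1: "A1 = mat n n (\<lambda>(i,j). N (v (Suc i)) (v (Suc j)))"
    and A5_A2: "A2 = mat n n (\<lambda>(i,j). bG (w (Suc i)) (w (Suc j)))"
    and A5_A: "A = A0 - \<rho> \<cdot>\<^sub>m A1"
    and A5_B: "B = A0 - (2 * \<rho>) \<cdot>\<^sub>m A1 + (\<rho>^2) \<cdot>\<^sub>m A2"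
    and A5_Bpd: "pos_def_mat n B"
    and A5_nu: "gen_eigenvalues_sorted n A B \<nu>"
    and A5_q: "q = card {k\<in>{1..n}. \<nu> k < 0}"
    and hm: "n \<le> m" "\<rho> \<le> lam (m + 1)"
  shows "(\<forall>k\<in>{1..q}. lam (m + 1 - k) \<ge> \<rho> - \<rho> / (1 - \<nu> k))
    \<and> (\<forall>Lam :: nat \<Rightarrow> real. n \<ge> 1 \<and> pos_def_mat n A1 \<and> gen_eigenvalues_sorted n A0 A1 Lam
          \<and> \<rho> > Lam n \<longrightarrow>
         \<nu> n < 0 \<and> q = n \<and> (\<forall>k\<in>{1..n}. lam (m + 1 - k) \<ge> \<rho> - \<rho> / (1 - \<nu> k)))"
proof -
  interpret eigenpair_expansion M N lam phi bG T
    by unfold_locales (use A1_M A1_N A2_mono A2_eig A2_orth A2_exp A3_bG A3_T(2) in blast)+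
  note bounds = gram_pencil_bounds[where n = n and v = "\<lambda>i. v (Suc i)" and w = "\<lambda>i. w (Suc i)" and \<rho> = \<rho>,
      folded A5_A0 A5_A1 A5_A2, folded A5_A A5_B, OF A5_Bpd A5_nu _ A5_rho hm]
  have adjoint: "bG (w (Suc i)) (T u) = N (v (Suc i)) u" if "i < n" for i u
    using A4 that by simp
  have prefix: "{1..q} \<subseteq> {k\<in>{1..n}. \<nu> k < 0}"
    unfolding A5_q by (rule sorted_negative_prefix[where \<nu> = \<nu>, OF gen_eigenvalues_sortedD(1)[OF A5_nu]])
  have "\<forall>k\<in>{1..q}. \<rho> - \<rho> / (1 - \<nu> k) \<le> lam (m + 1 - k)"
    using bounds(1)[OF adjoint] prefix by auto
  moreover have "\<nu> n < 0 \<and> q = n \<and> (\<forall>k\<in>{1..n}. \<rho> - \<rho> / (1 - \<nu> k) \<le> lam (m + 1 - k))"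
    if Lam: "1 \<le> n" "pos_def_mat n A1" "gen_eigenvalues_sorted n A0 A1 Lam" "Lam n < \<rho>" for Lam
  proof -
    have neg: "\<nu> k < 0" if "k \<in> {1..n}" for k
      using bounds(2)[OF adjoint Lam(2-4) that] .
    then have "{k\<in>{1..n}. \<nu> k < 0} = {1..n}" by auto
    then show ?thesis using neg bounds(1)[OF adjoint] Lam(1) unfolding A5_q by auto
  qed
  ultimately show ?thesis by auto
qed

end
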